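(* Let $M$ be a modular lattice of finite length with least element $0$ and greatest element $1$, and let $S(M)$ be its skeleton. Then (f) $S(M)=\{x\in M: x^{*+}=x\}$, and the maximal atomistic intervals of $M$ are exactly the intervals $[x,x^*]$ with $x\in S(M)$; (g) $S(M)$ is closed under the join $+$ of $M$, has least element $0$ and greatest element $1^+$, and with the order inherited from $M$ it is a lattice in which $x\vee y=x+y$ and $x\wedge y=(x\cdot y)^{*+}$.
   Context: $M$ is a modular lattice of finite length (every chain finite) with join $+$, meet $\cdot$. For $a\in M$: $a^*$ is the join of all elements covering $a$ if $a<1$, and $1^*=1$; $a^+$ is the meet of all elements covered by $a$ if $a>0$, and $0^+=0$; $a^{*+}$ means $(a^* )^+$. An interval $[a,b]$ is \emph{atomistic} if every element of it is a join of atoms of $[a,b]$ (elements covering $a$). The \emph{skeleton} $S(M)$ is the set of least elements of the maximal (under inclusion) atomistic intervals of $M$. *)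

theory Defs
  imports Main
begin

definition covers :: "'a::order \<Rightarrow> 'a \<Rightarrow> bool" where
  "covers a b \<longleftrightarrow> a < b \<and> \<not> (\<exists>c. a < c \<and> c < b)"

definition is_lub :: "'a::order set \<Rightarrow> 'a \<Rightarrow> bool" where
  "is_lub A u \<longleftrightarrow> (\<forall>s\<in>A. s \<le> u) \<and> (\<forall>v. (\<forall>s\<in>A. s \<le> v) \<longrightarrow> u \<le> v)"

definition is_glb :: "'a::order set \<Rightarrow> 'a \<Rightarrow> bool" where
  "is_glb A u \<longleftrightarrow> (\<forall>s\<in>A. u \<le> s) \<and> (\<forall>v. (\<forall>s\<in>A. v \<le> s) \<longrightarrow> v \<le> u)"

definition join_of :: "'a::order set \<Rightarrow> 'a" where
  "join_of A = (THE u. is_lub A u)"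

definition meet_of :: "'a::order set \<Rightarrow> 'a" where
  "meet_of A = (THE u. is_glb A u)"

definition upstar :: "'a::bounded_lattice \<Rightarrow> 'a" where
  "upstar a = (if a = top then top else join_of {b. covers a b})"

definition downplus :: "'a::bounded_lattice \<Rightarrow> 'a" where
  "downplus a = (if a = bot then bot else meet_of {b. covers b a})"

definition interval :: "'a::order \<Rightarrow> 'a \<Rightarrow> 'a set" where
  "interval a b = {x. a \<le> x \<and> x \<le> b}"

text \<open>[a,b] is atomistic: every element of it is the join (in [a,b]) of a set of
  atoms of [a,b]; the join in [a,b] of a set A of atoms is the join of insert a A
  (so the empty join is a).\<close>
definition atomistic :: "'a::order \<Rightarrow> 'a \<Rightarrow> bool" where
  "atomistic a b \<longleftrightarrow> a \<le> b \<and>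
     (\<forall>x\<in>interval a b. \<exists>A. A \<subseteq> {p. covers a p \<and> p \<le> b} \<and> is_lub (insert a A) x)"

definition max_atomistic :: "'a::order \<Rightarrow> 'a \<Rightarrow> bool" where
  "max_atomistic a b \<longleftrightarrow> atomistic a b \<and>
     \<not> (\<exists>c d. atomistic c d \<and> interval a b \<subset> interval c d)"

definition skeleton :: "'a::order set" where
  "skeleton = {a. \<exists>b. max_atomistic a b}"

definition modular :: "'a::lattice itself \<Rightarrow> bool" where
  "modular _ \<longleftrightarrow> (\<forall>x y z::'a. x \<le> z \<longrightarrow> sup x (inf y z) = inf (sup x y) z)"

definition finite_length :: "'a::order itself \<Rightarrow> bool" where
  "finite_length _ \<longleftrightarrow> (\<forall>C::'a set. Complete_Partial_Order.chain (\<le>) C \<longrightarrow> finite C)"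

end

theory Submission
  imports Defs
begin

text \<open>Call \<open>[a, b]\<close> atom-spanned if \<open>b\<close> is the join of \<open>a\<close> and the atoms of \<open>[a, b]\<close>.
  In a modular lattice of finite length every element of an atom-spanned interval has a
  complement in it, hence atom-spanned intervals are atomistic and closed under passing to
  subintervals. So \<open>[x, x\<^sup>*]\<close> is the largest atomistic interval with bottom \<open>x\<close>, and dually
  \<open>[u\<^sup>+, u]\<close> is atom-spanned, so \<open>u\<^sup>+\<close> is the least bottom of an atomistic interval with top \<open>u\<close>.
  Consequently \<open>[a, b]\<close> is maximal atomistic iff \<open>b = a\<^sup>*\<close> and \<open>a = a\<^sup>*\<^sup>+\<close>. The crucial
  inequality \<open>x \<le> u\<^sup>+\<close> for fixed points \<open>x\<close> with \<open>x\<^sup>* \<le> u\<close> comes from the diamond isomorphism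
  \<open>[x, u] \<cong> [x\<cdot>z, z]\<close> for a coatom \<open>z\<close> of \<open>u\<close> not above \<open>x\<close>. It makes \<open>x \<mapsto> x\<^sup>*\<^sup>+\<close> an
  interior operator, and the lattice structure of the skeleton is that of its fixed points.\<close>

lemma covers_le: "covers a b \<Longrightarrow> a \<le> b"
  unfolding covers_def by (simp add: less_imp_le)

lemma covers_between: "covers a b \<Longrightarrow> a \<le> t \<Longrightarrow> t \<le> b \<Longrightarrow> t = a \<or> t = b"
  unfolding covers_def by (metis order.order_iff_strict)

lemma is_lub_unique: "is_lub A u \<Longrightarrow> is_lub A v \<Longrightarrow> u = v"
  by (auto simp: is_lub_def intro: order.antisym)

lemma is_glb_unique: "is_glb A u \<Longrightarrow> is_glb A v \<Longrightarrow> u = v"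
  by (auto simp: is_glb_def intro: order.antisym)

section \<open>Lattices of finite length\<close>

locale finite_length_lattice =
  fixes T :: "'a::bounded_lattice itself"
  assumes finite_length: "finite_length T"
begin

lemma no_infinite_chain_sequence:
  fixes f :: "nat \<Rightarrow> 'a"
  assumes "\<And>i j. i < j \<Longrightarrow> f i < f j \<or> f j < f i"
  shows False
proof -
  have comparable: "f i < f j \<or> f j < f i" if "i \<noteq> j" for i j
    using assms[of i j] assms[of j i] that by (meson linorder_neqE_nat)
  have "inj f"
  proof (rule injI)
    fix i j assume "f i = f j"
    then show "i = j" using comparable[of i j] by auto
  qed
  have "Complete_Partial_Order.chain (\<le>) (range f)"
  proof (rule Complete_Partial_Order.chainI)
    fix x y assume "x \<in> range f" "y \<in> range f"
    then obtain i j where "x = f i" "y = f j" by blast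
    then show "x \<le> y \<or> y \<le> x" using comparable[of i j] by (cases "i = j") auto
  qed
  then have "finite (range f)"
    using finite_length unfolding finite_length_def by blast
  then show False
    using finite_imageD[OF _ \<open>inj f\<close>] by simp
qed

lemma finite_length_wf_less: "wf {(x::'a, y). x < y}"
  unfolding wf_iff_no_infinite_down_chain
proof (intro notI, elim exE)
  fix f :: "nat \<Rightarrow> 'a"
  assume "\<forall>i. (f (Suc i), f i) \<in> {(x, y). x < y}"
  then have desc: "f (Suc i) < f i" for i by simp
  have "f j < f i" if "i < j" for i j
    using that by (induction j) (auto intro: less_trans desc simp: less_Suc_eq)
  then show False using no_infinite_chain_sequence[of f] by blast
qed

lemma finite_length_wf_greater: "wf {(x::'a, y). y < x}"
  unfolding wf_iff_no_infinite_down_chain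
proof (intro notI, elim exE)
  fix f :: "nat \<Rightarrow> 'a"
  assume "\<forall>i. (f (Suc i), f i) \<in> {(x, y). y < x}"
  then have "f i < f (Suc i)" for i by simp
  then show False using no_infinite_chain_sequence[of f] lift_Suc_mono_less[of f] by blast
qed

lemma ex_maximal: "(x::'a) \<in> Q \<Longrightarrow> \<exists>m\<in>Q. \<forall>y\<in>Q. \<not> m < y"
  by (erule wfE_min[OF finite_length_wf_greater]) auto

lemma ex_minimal: "(x::'a) \<in> Q \<Longrightarrow> \<exists>m\<in>Q. \<forall>y\<in>Q. \<not> y < m"
  by (erule wfE_min[OF finite_length_wf_less]) auto

text \<open>A minimal upper bound is least, since upper bounds are closed under meets.\<close>

lemma ex_is_lub: "\<exists>u::'a. is_lub A u"
proof -
  let ?U = "{v. \<forall>s\<in>A. s \<le> v}"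
  obtain m where m: "m \<in> ?U" and min: "\<forall>v\<in>?U. \<not> v < m"
    using ex_minimal[of top ?U] by auto
  have "m \<le> v" if "v \<in> ?U" for v
  proof -
    have "inf m v \<in> ?U" using m that by simp
    then show ?thesis using min by (metis inf_sup_ord(1,2) nless_le)
  qed
  then show ?thesis using m unfolding is_lub_def by blast
qed

lemma ex_is_glb: "\<exists>u::'a. is_glb A u"
proof -
  let ?L = "{v. \<forall>s\<in>A. v \<le> s}"
  obtain m where m: "m \<in> ?L" and max: "\<forall>v\<in>?L. \<not> m < v"
    using ex_maximal[of bot ?L] by auto
  have "v \<le> m" if "v \<in> ?L" for v
  proof -
    have "sup m v \<in> ?L" using m that by simp
    then show ?thesis using max by (metis inf_sup_ord(3,4) nless_le)
  qed
  then show ?thesis using m unfolding is_glb_def by blast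
qed

lemma is_lub_join_of: "is_lub A (join_of (A::'a set))"
  unfolding join_of_def using ex_is_lub is_lub_unique by (metis theI)

lemma is_glb_meet_of: "is_glb A (meet_of (A::'a set))"
  unfolding meet_of_def using ex_is_glb is_glb_unique by (metis theI)

lemma ex_covers_above: assumes "(a::'a) < y" shows "\<exists>p. covers a p \<and> p \<le> y"
proof -
  obtain m where m: "a < m" "m \<le> y" "\<forall>t. a < t \<and> t \<le> y \<longrightarrow> \<not> t < m"
    using ex_minimal[of y "{t. a < t \<and> t \<le> y}"] assms by auto
  then have "covers a m"
    unfolding covers_def by (metis nless_le dual_order.trans)
  then show ?thesis using m by blast
qed

lemma ex_covered_below: assumes "(w::'a) < u" shows "\<exists>z. covers z u \<and> w \<le> z"
proof -
  obtain m where m: "w \<le> m" "m < u" "\<forall>t. w \<le> t \<and> t < u \<longrightarrow> \<not> m < t"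
    using ex_maximal[of w "{t. w \<le> t \<and> t < u}"] assms by auto
  then have "covers m u"
    unfolding covers_def by (metis nless_le order_trans)
  then show ?thesis using m by blast
qed

lemma is_lub_upstar: "is_lub (insert x {p. covers x p}) (upstar (x::'a))"
proof (cases "x = top")
  case True
  then have "{p. covers x p} = {}" by (auto simp: covers_def)
  then show ?thesis using True by (simp add: upstar_def is_lub_def)
next
  case False
  then obtain p where "covers x p" using ex_covers_above top.not_eq_extremum by blast
  then show ?thesis
    using False is_lub_join_of[of "{p. covers x p}"] unfolding upstar_def is_lub_def
    by (auto intro: order_trans covers_le)
qed

lemma is_glb_downplus: "is_glb (insert u {z. covers z u}) (downplus (u::'a))"
proof (cases "u = bot")
  case True
  then have "{z. covers z u} = {}" by (auto simp: covers_def)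
  then show ?thesis using True by (simp add: downplus_def is_glb_def)
next
  case False
  then obtain z where "covers z u" using ex_covered_below bot.not_eq_extremum by blast
  then show ?thesis
    using False is_glb_meet_of[of "{z. covers z u}"] unfolding downplus_def is_glb_def
    by (auto intro: order_trans covers_le)
qed

lemma upstar_top [simp]: "upstar (top::'a) = top"
  by (simp add: upstar_def)

lemma upstar_ge: "x \<le> upstar (x::'a)"
  using is_lub_upstar by (simp add: is_lub_def)

lemma covers_le_upstar: "covers x p \<Longrightarrow> p \<le> upstar (x::'a)"
  using is_lub_upstar by (simp add: is_lub_def)

lemma upstar_least: "x \<le> v \<Longrightarrow> (\<And>p. covers x p \<Longrightarrow> p \<le> v) \<Longrightarrow> upstar (x::'a) \<le> v"
  using is_lub_upstar by (simp add: is_lub_def)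

lemma downplus_le: "downplus u \<le> (u::'a)"
  using is_glb_downplus by (simp add: is_glb_def)

lemma downplus_le_covered: "covers z u \<Longrightarrow> downplus (u::'a) \<le> z"
  using is_glb_downplus by (simp add: is_glb_def)

lemma downplus_greatest: "v \<le> u \<Longrightarrow> (\<And>z. covers z u \<Longrightarrow> v \<le> z) \<Longrightarrow> v \<le> downplus (u::'a)"
  using is_glb_downplus by (simp add: is_glb_def)

end

section \<open>Modular lattices\<close>

locale modular_lattice =
  fixes T :: "'a::lattice itself"
  assumes modular: "modular T"
begin

lemma modular_law: "(x::'a) \<le> z \<Longrightarrow> sup x (inf y z) = inf (sup x y) z"
  using modular unfolding modular_def by blast

lemma covers_sup_transpose:
  assumes c: "covers c p" and cz: "c \<le> (z::'a)" and pz: "\<not> p \<le> z"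
  shows "covers z (sup z p)"
  unfolding covers_def
proof (intro conjI notI)
  show "z < sup z p" using pz by (metis le_sup_iff order.not_eq_order_implies_strict sup_ge1)
next
  assume "\<exists>w. z < w \<and> w < sup z p"
  then obtain w where w: "z < w" "w < sup z p" by blast
  have eq: "sup z (inf p w) = w"
    using modular_law[of z w p] w by (simp add: inf.absorb2 less_imp_le)
  have "c \<le> inf p w" using c cz w by (meson covers_le le_inf_iff less_imp_le order_trans)
  then have "inf p w = c \<or> inf p w = p" using covers_between[OF c] by simp
  then show False
  proof
    assume "inf p w = c"
    then have "w = z" using eq cz by (simp add: sup.absorb1)
    then show False using w by simp
  next
    assume "inf p w = p"
    then have "p \<le> w" by (metis inf.cobounded2)
    then show False using w by (meson le_sup_iff less_imp_le not_le_imp_less order.strict_iff_not)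
  qed
qed

lemma covers_inf_transpose:
  assumes c: "covers z u" and wu: "w \<le> (u::'a)" and wz: "\<not> w \<le> z"
  shows "covers (inf w z) w"
  unfolding covers_def
proof (intro conjI notI)
  show "inf w z < w" using wz by (metis inf.cobounded1 inf.cobounded2 order.not_eq_order_implies_strict)
next
  assume "\<exists>v. inf w z < v \<and> v < w"
  then obtain v where v: "inf w z < v" "v < w" by blast
  have eq: "inf (sup v z) w = v"
    using modular_law[of v w z] v by (metis inf_commute less_imp_le sup.absorb1)
  have "z \<le> sup v z" "sup v z \<le> u" using v wu c covers_le by (auto intro: order_trans less_imp_le)
  then have "sup v z = z \<or> sup v z = u" using covers_between[OF c] by auto
  then show False
  proof
    assume "sup v z = z"
    then have "v \<le> inf w z" using v by (metis inf.orderI inf_le2 le_inf_iff less_imp_le sup.absorb_iff2)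
    then show False using v(1) by (meson leD)
  next
    assume "sup v z = u"
    then have "v = w" using eq wu by (simp add: inf.absorb2)
    then show False using v by simp
  qed
qed

end

section \<open>Atom-spanned intervals\<close>

lemma interval_subset_iff:
  "(a::'a::order) \<le> b \<Longrightarrow> interval a b \<subseteq> interval c d \<longleftrightarrow> c \<le> a \<and> b \<le> d"
  unfolding interval_def by (auto intro: order_trans)

text \<open>Unlike \<open>atomistic a b\<close> this only asks for \<open>b\<close> itself to be a join of atoms; the two notions
  agree in modular lattices of finite length (\<open>atomistic_iff_atom_spanned\<close>).\<close>

definition atom_spanned :: "'a::order \<Rightarrow> 'a \<Rightarrow> bool" where
  "atom_spanned a b \<longleftrightarrow>
     a \<le> b \<and> (\<forall>v. a \<le> v \<and> (\<forall>p. covers a p \<and> p \<le> b \<longrightarrow> p \<le> v) \<longrightarrow> b \<le> v)"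

lemma atom_spannedI:
  assumes "a \<le> b" and "\<And>v. a \<le> v \<Longrightarrow> (\<And>p. covers a p \<Longrightarrow> p \<le> b \<Longrightarrow> p \<le> v) \<Longrightarrow> b \<le> v"
  shows "atom_spanned a b"
  using assms unfolding atom_spanned_def by blast

lemma atom_spannedD:
  "atom_spanned a b \<Longrightarrow> a \<le> v \<Longrightarrow> (\<And>p. covers a p \<Longrightarrow> p \<le> b \<Longrightarrow> p \<le> v) \<Longrightarrow> b \<le> v"
  unfolding atom_spanned_def by blast

lemma atom_spanned_le: "atom_spanned a b \<Longrightarrow> a \<le> b"
  unfolding atom_spanned_def by blast

lemma atomistic_imp_atom_spanned:
  assumes "atomistic a b" shows "atom_spanned a b"
proof -
  obtain A where "A \<subseteq> {p. covers a p \<and> p \<le> b}" "is_lub (insert a A) b"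
    using assms unfolding atomistic_def interval_def by auto
  then show ?thesis
    using assms unfolding atomistic_def atom_spanned_def is_lub_def by blast
qed

locale modular_finite_length = modular_lattice T + finite_length_lattice T
  for T :: "'a::bounded_lattice itself"
begin

lemma upstar_mono:
  assumes "x \<le> (s::'a)" shows "upstar x \<le> upstar s"
proof (rule upstar_least)
  show "x \<le> upstar s" using assms upstar_ge order_trans by blast
next
  fix p assume p: "covers x p"
  show "p \<le> upstar s"
  proof (cases "p \<le> s")
    case True
    then show ?thesis using upstar_ge order_trans by blast
  next
    case False
    then have "covers s (sup s p)" using covers_sup_transpose[OF p assms] by simp
    then have "sup s p \<le> upstar s" by (rule covers_le_upstar)
    then show ?thesis by simp
  qed
qed

lemma atom_spanned_upstar: "atom_spanned a (upstar (a::'a))"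
proof (rule atom_spannedI[OF upstar_ge])
  fix v assume "a \<le> v" "\<And>p. covers a p \<Longrightarrow> p \<le> upstar a \<Longrightarrow> p \<le> v"
  then show "upstar a \<le> v" by (blast intro: upstar_least covers_le_upstar)
qed

lemma atom_spanned_le_upstar: "atom_spanned a (b::'a) \<Longrightarrow> b \<le> upstar a"
  by (rule atom_spannedD) (auto intro: upstar_ge covers_le_upstar)

lemma atom_spanned_raise_bottom:
  assumes ab: "atom_spanned c (d::'a)" and ca: "c \<le> a" and ad: "a \<le> d"
  shows "atom_spanned a d"
proof (rule atom_spannedI[OF ad])
  fix v assume av: "a \<le> v" and atoms: "\<And>p. covers a p \<Longrightarrow> p \<le> d \<Longrightarrow> p \<le> v"
  show "d \<le> v"
  proof (rule atom_spannedD[OF ab])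
    show "c \<le> v" using ca av by simp
  next
    fix p assume p: "covers c p" "p \<le> d"
    show "p \<le> v"
    proof (cases "p \<le> a")
      case True
      then show ?thesis using av by simp
    next
      case False
      then have "covers a (sup a p)" using covers_sup_transpose p ca by blast
      then have "sup a p \<le> v" using atoms[of "sup a p"] p(2) ad by simp
      then show ?thesis by simp
    qed
  qed
qed

lemma atom_spanned_complement:
  assumes ab: "atom_spanned a (b::'a)" and ay: "a \<le> y"
  obtains c where "a \<le> c" "c \<le> b" "inf y c \<le> a" "b \<le> sup y c"
proof -
  obtain c where c: "a \<le> c" "c \<le> b" "inf y c \<le> a"
    and max: "\<And>t. a \<le> t \<Longrightarrow> t \<le> b \<Longrightarrow> inf y t \<le> a \<Longrightarrow> \<not> c < t"
    using ex_maximal[of a "{t. a \<le> t \<and> t \<le> b \<and> inf y t \<le> a}"] atom_spanned_le[OF ab] by auto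
  have "q \<le> sup y c" if q: "covers a q" "q \<le> b" for q
  proof (rule ccontr)
    assume nq: "\<not> q \<le> sup y c"
    have "a \<le> inf q (sup y c)" using c q covers_le by (auto intro: le_supI2)
    moreover have "inf q (sup y c) \<noteq> q" using nq by (metis inf.absorb_iff1)
    ultimately have "inf q (sup y c) = a"
      using covers_between[OF q(1), of "inf q (sup y c)"] by simp
    then have "inf (sup c q) (sup y c) = c"
      using modular_law[of c "sup y c" q] c(1) by (simp add: sup.absorb1)
    moreover have "inf y (sup c q) \<le> inf (sup c q) (sup y c)"
      by (simp add: le_infI1 le_infI2)
    ultimately have "inf y (sup c q) \<le> inf y c" by simp
    then have "inf y (sup c q) \<le> a" using c(3) by (rule order_trans)
    moreover have "c < sup c q" using nq by (metis le_supI2 sup.cobounded1 sup.order_iff order.not_eq_order_implies_strict)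
    ultimately show False using max c q by (meson le_supI le_supI1)
  qed
  then have "b \<le> sup y c" using atom_spannedD[OF ab] ay by (meson le_supI1)
  with c show thesis by (rule that)
qed

lemma atom_spanned_lower_top:
  assumes ab: "atom_spanned a b" and ax: "a \<le> x" and xb: "x \<le> (b::'a)"
  shows "atom_spanned a x"
proof (rule atom_spannedI[OF ax])
  fix v assume av: "a \<le> v" and atoms: "\<And>p. covers a p \<Longrightarrow> p \<le> x \<Longrightarrow> p \<le> v"
  let ?y = "inf x v"
  have "a \<le> ?y" using ax av by simp
  then obtain c where c: "a \<le> c" "inf ?y c \<le> a" "b \<le> sup ?y c"
    by (rule atom_spanned_complement[OF ab])
  have "sup ?y (inf c x) = inf (sup ?y c) x" by (rule modular_law) simp
  also have "\<dots> = x" using order_trans[OF xb c(3)] by (rule inf.absorb2)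
  finally have x_eq: "sup ?y (inf c x) = x" .
  have "inf c x \<le> a"
  proof (rule ccontr)
    assume "\<not> inf c x \<le> a"
    then have "a < inf c x" using ax c(1) by (simp add: order.not_eq_order_implies_strict)
    then obtain q where q: "covers a q" "q \<le> inf c x" using ex_covers_above by blast
    then have "q \<le> inf ?y c" using atoms by simp
    then have "q \<le> a" using c(2) by (rule order_trans)
    then show False using q(1) unfolding covers_def by (meson leD)
  qed
  then have "sup ?y (inf c x) \<le> ?y" using \<open>a \<le> ?y\<close> by (meson le_supI order_refl order_trans)
  then show "x \<le> v" unfolding x_eq by simp
qed

lemma atom_spanned_imp_atomistic:
  assumes "atom_spanned a (b::'a)" shows "atomistic a b"
  unfolding atomistic_def interval_def
proof (intro conjI ballI)
  show "a \<le> b" using assms by (rule atom_spanned_le)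
next
  fix x assume "x \<in> {x. a \<le> x \<and> x \<le> b}"
  then have x: "a \<le> x" "x \<le> b" by auto
  let ?A = "{p. covers a p \<and> p \<le> x}"
  have "is_lub (insert a ?A) x"
    using atom_spannedD[OF atom_spanned_lower_top[OF assms x]] x unfolding is_lub_def by auto
  moreover have "?A \<subseteq> {p. covers a p \<and> p \<le> b}" using x by auto
  ultimately show "\<exists>A. A \<subseteq> {p. covers a p \<and> p \<le> b} \<and> is_lub (insert a A) x" by blast
qed

lemma atomistic_iff_atom_spanned: "atomistic a (b::'a) \<longleftrightarrow> atom_spanned a b"
  using atomistic_imp_atom_spanned atom_spanned_imp_atomistic by blast

lemma atom_spanned_ex_coatom_avoiding:
  assumes au: "atom_spanned a (u::'a)" and p: "covers a p" "p \<le> u"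
  obtains z where "covers z u" "a \<le> z" "\<not> p \<le> z"
proof -
  obtain c where c: "a \<le> c" "c \<le> u" "inf p c \<le> a" "u \<le> sup p c"
    using atom_spanned_complement[OF au, of p] p covers_le by blast
  have "\<not> p \<le> c"
    using c(3) p(1) unfolding covers_def by (metis inf.absorb1 leD)
  then have "covers c (sup c p)" using covers_sup_transpose[OF p(1) c(1)] by simp
  moreover have "sup c p = u" using c p by (simp add: order.antisym sup_commute)
  ultimately show thesis using that c(1) \<open>\<not> p \<le> c\<close> by simp
qed

lemma downplus_le_if_atom_spanned:
  assumes au: "atom_spanned a (u::'a)" shows "downplus u \<le> a"
proof (rule ccontr)
  let ?t = "sup (downplus u) a"
  assume "\<not> downplus u \<le> a"
  then have "a \<noteq> ?t" by (metis sup.cobounded1)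
  then have "a < ?t" by (simp add: order.not_eq_order_implies_strict)
  then obtain p where p: "covers a p" "p \<le> ?t" using ex_covers_above by blast
  have "?t \<le> u" using atom_spanned_le[OF au] downplus_le by simp
  with p(2) have "p \<le> u" by (rule order_trans)
  obtain z where z: "covers z u" "a \<le> z" "\<not> p \<le> z"
    by (rule atom_spanned_ex_coatom_avoiding[OF au p(1) \<open>p \<le> u\<close>])
  have "?t \<le> z" using downplus_le_covered[OF z(1)] z(2) by simp
  then show False using p(2) z(3) by (meson order_trans)
qed

lemma downplus_upstar_le: "downplus (upstar x) \<le> (x::'a)"
  using downplus_le_if_atom_spanned[OF atom_spanned_upstar] .

lemma covers_downplus_if_minimal:
  assumes z: "covers z (u::'a)" and p: "downplus u \<le> p" "p \<le> u" "\<not> p \<le> z"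
    and min: "\<And>t. downplus u \<le> t \<Longrightarrow> t < p \<Longrightarrow> t \<le> z"
  shows "covers (downplus u) p"
proof -
  have "inf p z \<le> q" if q: "covers q u" for q
  proof (rule ccontr)
    assume npzq: "\<not> inf p z \<le> q"
    then have "\<not> p \<le> q" by (meson inf.coboundedI1)
    then have cpq: "covers (inf p q) p" using covers_inf_transpose[OF q p(2)] by simp
    have "downplus u \<le> inf p q" using p(1) downplus_le_covered[OF q] by simp
    moreover have "inf p q < p" using cpq by (simp add: covers_def)
    ultimately have "inf p q \<le> inf p z" using min by simp
    then have "inf p z = inf p q \<or> inf p z = p" using covers_between[OF cpq] by simp
    then show False using npzq p(3) by (metis inf.absorb_iff1 inf.cobounded2)
  qed
  then have "inf p z \<le> downplus u" using p(2) by (auto intro: downplus_greatest le_infI1)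
  moreover have "downplus u \<le> inf p z" using p(1) downplus_le_covered[OF z] by simp
  ultimately have "downplus u = inf p z" by (rule order.antisym[rotated])
  then show ?thesis using covers_inf_transpose[OF z p(2,3)] by simp
qed

lemma atom_spanned_downplus: "atom_spanned (downplus u) (u::'a)"
proof (rule atom_spannedI[OF downplus_le])
  fix v assume atoms: "\<And>p. covers (downplus u) p \<Longrightarrow> p \<le> u \<Longrightarrow> p \<le> v"
  show "u \<le> v"
  proof (rule ccontr)
    assume "\<not> u \<le> v"
    then have "inf v u \<noteq> u" by (metis inf.cobounded1)
    then have "inf v u < u" by (simp add: order.not_eq_order_implies_strict)
    then obtain z where z: "covers z u" "inf v u \<le> z" using ex_covered_below by blast
    let ?Q = "{t. downplus u \<le> t \<and> t \<le> u \<and> \<not> t \<le> z}"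
    have "u \<in> ?Q" using z(1) downplus_le by (auto simp: covers_def)
    from ex_minimal[OF this] obtain p where "p \<in> ?Q" and min: "\<forall>t\<in>?Q. \<not> t < p"
      by blast
    then have p: "downplus u \<le> p" "p \<le> u" "\<not> p \<le> z" by auto
    have "t \<le> z" if "downplus u \<le> t" "t < p" for t
    proof -
      have "t \<le> u" using less_imp_le[OF that(2)] p(2) by (rule order_trans)
      then show ?thesis using min that by blast
    qed
    then have "covers (downplus u) p" by (rule covers_downplus_if_minimal[OF z(1) p])
    then have "p \<le> inf v u" using atoms p(2) by simp
    then show False using z(2) p(3) order_trans by blast
  qed
qed

text \<open>If \<open>z\<close> is a coatom of \<open>u \<ge> x\<^sup>*\<close> not above \<open>x\<close>, then \<open>u = x + z\<close>, and by the
  diamond isomorphism \<open>p \<mapsto> p \<cdot> z\<close> every atom \<open>p\<close> of \<open>[x, x\<^sup>*]\<close> is \<open>x + q\<close> for an atom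
  \<open>q = p \<cdot> z\<close> of \<open>[x \<cdot> z, x\<^sup>*]\<close>.\<close>

lemma atom_spanned_inf_coatom_upstar:
  assumes z: "covers z u" and xu: "upstar x \<le> u" and xz: "\<not> x \<le> (z::'a)"
  shows "atom_spanned (inf x z) (upstar x)"
proof (rule atom_spannedI)
  show "inf x z \<le> upstar x" using upstar_ge by (meson inf.coboundedI1)
next
  fix v assume atoms: "\<And>p. covers (inf x z) p \<Longrightarrow> p \<le> upstar x \<Longrightarrow> p \<le> v"
  have x_u: "x \<le> u" using upstar_ge xu by (rule order_trans)
  have "covers (inf x z) x" using covers_inf_transpose[OF z x_u xz] .
  then have xv: "x \<le> v" using atoms upstar_ge by blast
  have "sup x z \<noteq> z" using xz by (simp add: le_iff_sup)
  then have "sup x z = u"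
    using covers_between[OF z, of "sup x z"] x_u covers_le[OF z] by auto
  show "upstar x \<le> v"
  proof (rule upstar_least[OF xv])
    fix p assume xp: "covers x p"
    let ?q = "inf p z"
    have pu: "p \<le> upstar x" using xp by (rule covers_le_upstar)
    have p_eq: "sup x ?q = p"
      using modular_law[of x p z] covers_le[OF xp] \<open>sup x z = u\<close> order_trans[OF pu xu]
      by (simp add: inf_commute inf.absorb1)
    then have "\<not> ?q \<le> x" using xp unfolding covers_def by (metis sup.absorb1 less_irrefl)
    then have "covers (inf ?q x) ?q" using covers_inf_transpose[OF xp] by simp
    moreover have "inf ?q x = inf x z"
    proof -
      have "inf x z \<le> p" using covers_le[OF xp] by (rule le_infI1)
      then have "inf p (inf x z) = inf x z" by (rule inf.absorb2)
      then show ?thesis by (simp add: inf_commute inf_left_commute)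
    qed
    ultimately have "?q \<le> v" using atoms pu by (metis inf.coboundedI1)
    then show "p \<le> v" using xv p_eq by (metis le_supI)
  qed
qed

lemma le_downplus_if_upstar_le:
  assumes fixed: "downplus (upstar x) = x" and xu: "upstar x \<le> (u::'a)"
  shows "x \<le> downplus u"
proof (rule downplus_greatest)
  show "x \<le> u" using upstar_ge xu by (rule order_trans)
next
  fix z assume z: "covers z u"
  show "x \<le> z"
  proof (rule ccontr)
    assume "\<not> x \<le> z"
    then have "downplus (upstar x) \<le> inf x z"
      using downplus_le_if_atom_spanned[OF atom_spanned_inf_coatom_upstar[OF z xu]] by simp
    then show False using fixed \<open>\<not> x \<le> z\<close> by simp
  qed
qed

lemma upstar_downplus_upstar: "upstar (downplus (upstar x)) = upstar (x::'a)"
proof (rule order.antisym)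
  let ?a = "downplus (upstar x)"
  have "upstar x \<le> upstar ?a" by (rule atom_spanned_le_upstar[OF atom_spanned_downplus])
  then have "atom_spanned x (upstar ?a)"
    using atom_spanned_raise_bottom[OF atom_spanned_upstar downplus_upstar_le] upstar_ge order_trans
    by blast
  then show "upstar ?a \<le> upstar x" by (rule atom_spanned_le_upstar)
  show "upstar x \<le> upstar ?a" by fact
qed

end

section \<open>The skeleton\<close>

context modular_finite_length
begin

lemma max_atomistic_imp_fixpoint:
  assumes "max_atomistic a (b::'a)"
  shows "downplus (upstar a) = a \<and> b = upstar a"
proof -
  have at: "atomistic a b" and no_larger: "\<And>c d. atomistic c d \<Longrightarrow> \<not> interval a b \<subset> interval c d"
    using assms unfolding max_atomistic_def by auto
  have ab: "a \<le> b" using at by (simp add: atomistic_def)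
  have "b \<le> upstar a"
    using at by (simp add: atomistic_iff_atom_spanned atom_spanned_le_upstar)
  then have "interval a b \<subseteq> interval a (upstar a)" using ab by (simp add: interval_subset_iff)
  then have "interval a b = interval a (upstar a)"
    using no_larger atom_spanned_upstar by (auto simp: atomistic_iff_atom_spanned)
  then have b: "b = upstar a" using ab upstar_ge by (metis interval_subset_iff order.antisym order.refl)
  have "interval a b \<subseteq> interval (downplus (upstar a)) (upstar a)"
    using ab b downplus_upstar_le by (simp add: interval_subset_iff)
  then have "interval a b = interval (downplus (upstar a)) (upstar a)"
    using no_larger atom_spanned_downplus by (auto simp: atomistic_iff_atom_spanned)
  then have "a \<le> downplus (upstar a)" using ab b downplus_le by (metis interval_subset_iff order.refl)
  then show ?thesis using b downplus_upstar_le order.antisym by blast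
qed

lemma max_atomistic_upstar:
  assumes fixed: "downplus (upstar a) = (a::'a)"
  shows "max_atomistic a (upstar a)"
  unfolding max_atomistic_def
proof (intro conjI notI)
  show "atomistic a (upstar a)" by (simp add: atomistic_iff_atom_spanned atom_spanned_upstar)
next
  assume "\<exists>c d. atomistic c d \<and> interval a (upstar a) \<subset> interval c d"
  then obtain c d where cd: "atom_spanned c d" "interval a (upstar a) \<subset> interval c d"
    by (auto simp: atomistic_iff_atom_spanned)
  then have ca: "c \<le> a" and ud: "upstar a \<le> d"
    using upstar_ge interval_subset_iff by blast+
  have "d \<le> upstar a"
    using atom_spanned_raise_bottom[OF cd(1) ca] ud upstar_ge order_trans atom_spanned_le_upstar by blast
  then have d: "d = upstar a" using ud by simp
  have "a \<le> c" using downplus_le_if_atom_spanned[OF cd(1)] fixed d by simp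
  then show False using cd(2) d ca by simp
qed

lemma max_atomistic_iff: "max_atomistic a (b::'a) \<longleftrightarrow> downplus (upstar a) = a \<and> b = upstar a"
  using max_atomistic_imp_fixpoint max_atomistic_upstar by blast

lemma skeleton_eq: "skeleton = {x::'a. downplus (upstar x) = x}"
  unfolding skeleton_def using max_atomistic_iff by auto

lemma max_atomistic_iff_skeleton: "max_atomistic a (b::'a) \<longleftrightarrow> a \<in> skeleton \<and> b = upstar a"
  by (simp add: max_atomistic_iff skeleton_eq)

lemma downplus_upstar_mem_skeleton: "downplus (upstar w) \<in> (skeleton::'a set)"
  by (simp add: skeleton_eq upstar_downplus_upstar)

lemma le_downplus_upstar_iff:
  assumes "z \<in> (skeleton::'a set)"
  shows "z \<le> downplus (upstar w) \<longleftrightarrow> z \<le> w"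
  using assms le_downplus_if_upstar_le upstar_mono downplus_upstar_le order_trans
  unfolding skeleton_eq by blast

lemma sup_mem_skeleton:
  assumes "x \<in> skeleton" "y \<in> (skeleton::'a set)"
  shows "sup x y \<in> skeleton"
proof -
  have "sup x y \<le> downplus (upstar (sup x y))"
    using le_downplus_upstar_iff[OF assms(1)] le_downplus_upstar_iff[OF assms(2)] by simp
  then show ?thesis
    unfolding skeleton_eq using downplus_upstar_le order.antisym by blast
qed

lemma bot_mem_skeleton: "bot \<in> (skeleton::'a set)"
  unfolding skeleton_eq using downplus_upstar_le bot_unique by blast

end

theorem theorem6p2:
  assumes "modular TYPE('a::bounded_lattice)"
    and "finite_length TYPE('a)"
  shows "(skeleton = {x::'a. downplus (upstar x) = x} \<and>
          (\<forall>a b::'a. max_atomistic a b \<longleftrightarrow> a \<in> skeleton \<and> b = upstar a))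
       \<and> ((\<forall>x\<in>skeleton. \<forall>y\<in>skeleton. sup x y \<in> (skeleton::'a set)) \<and>
          bot \<in> (skeleton::'a set) \<and> downplus (top::'a) \<in> skeleton \<and>
          (\<forall>x\<in>skeleton. bot \<le> x \<and> x \<le> downplus (top::'a)) \<and>
          (\<forall>x\<in>skeleton. \<forall>y\<in>skeleton.
              (\<forall>z\<in>skeleton. (x \<le> z \<and> y \<le> z) \<longleftrightarrow> sup x y \<le> z) \<and>
              downplus (upstar (inf x y)) \<in> (skeleton::'a set) \<and>
              (\<forall>z\<in>skeleton. (z \<le> x \<and> z \<le> y) \<longleftrightarrow> z \<le> downplus (upstar (inf x y)))))"
proof -
  interpret modular_finite_length "TYPE('a)"
    using assms by unfold_locales
  show ?thesis
    using skeleton_eq max_atomistic_iff_skeleton sup_mem_skeleton bot_mem_skeleton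
      downplus_upstar_mem_skeleton[of top] le_downplus_upstar_iff[of _ top]
      downplus_upstar_mem_skeleton le_downplus_upstar_iff
    by (auto simp del: le_inf_iff)
qed

end
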